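(* Let $S$ be a quasi-tree of a map $\mathcal M$ and let $e,f$ be distinct edges of $\mathcal M$ that are adjacent in $\widetilde{\Lambda}(\mathcal M,S)$. Then $S'=S\triangle\{e,f\}$ is a quasi-tree of $\mathcal M$, and the vertex-colored circle graph $\widetilde{\Lambda}(\mathcal M,S')$ is obtained from $\widetilde{\Lambda}(\mathcal M,S)\wedge ef$ by exchanging the colors of $e$ and $f$. Conversely, if $S\triangle\{e,f\}$ is a quasi-tree of $\mathcal M$ (for distinct edges $e,f$), then $e$ and $f$ are adjacent in $\widetilde{\Lambda}(\mathcal M,S)$.
   Context: A map is a triple $\mathcal M=(B,\sigma,\alpha)$ with $B$ finite, $\sigma,\alpha\in\mathrm{Sym}(B)$, $\alpha$ a fixed-point-free involution, $\langle\sigma,\alpha\rangle$ transitive on $B$. Edges are the cycles of $\alpha$; $\underline b=\{b,\alpha(b)\}$. The tour of a set $F$ of edges is the permutation $\tau$ with $\tau(b)=\sigma(\alpha(b))$ if $\underline b\in F$, $\tau(b)=\sigma(b)$ otherwise; a quasi-tree is a set of edges whose tour is a single cycle on $B$. For a quasi-tree $S$ with tour $\tau$, $\widetilde\Lambda(\mathcal M,S)$ is the chord diagram obtained by placing the flags on a circle in the cyclic order of $\tau$ and joining by a chord the two flags of each edge, the chord of an edge colored $1$ if the edge is in $S$ and $2$ otherwise; it is identified with its circle graph, whose vertices are the edges of $\mathcal M$ (with these colors), two being adjacent iff their chords cross (i.e. their flags alternate around the circle). For a graph $G$ and vertex $v$, the local complementation $G\ast v$ replaces the subgraph induced on the neighbors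 of $v$ by its complement; for an edge $uv$, the pivot is $G\wedge uv=G\ast u\ast v\ast u$. *)

theory Defs
  imports "HOL-Combinatorics.Permutations"
begin

text \<open>A map (B, sigma, alpha): B finite, sigma and alpha permutations of B,
  alpha a fixed-point-free involution, and the group generated by sigma and alpha
  transitive on B (expressed as connectivity of B under the generators and their inverses).\<close>

definition gen_rel :: "'a set \<Rightarrow> ('a \<Rightarrow> 'a) \<Rightarrow> ('a \<Rightarrow> 'a) \<Rightarrow> ('a \<times> 'a) set" where
  "gen_rel B \<sigma> \<alpha> = {(x, \<sigma> x) | x. x \<in> B} \<union> {(x, inv \<sigma> x) | x. x \<in> B} \<union> {(x, \<alpha> x) | x. x \<in> B}"

definition is_map :: "'a set \<Rightarrow> ('a \<Rightarrow> 'a) \<Rightarrow> ('a \<Rightarrow> 'a) \<Rightarrow> bool" where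
  "is_map B \<sigma> \<alpha> \<longleftrightarrow> finite B \<and> \<sigma> permutes B \<and> \<alpha> permutes B
     \<and> (\<forall>b\<in>B. \<alpha> b \<noteq> b \<and> \<alpha> (\<alpha> b) = b)
     \<and> (\<forall>b\<in>B. \<forall>c\<in>B. (b, c) \<in> (gen_rel B \<sigma> \<alpha>)\<^sup>*)"

definition edge_of :: "('a \<Rightarrow> 'a) \<Rightarrow> 'a \<Rightarrow> 'a set" where
  "edge_of \<alpha> b = {b, \<alpha> b}"

definition map_edges :: "'a set \<Rightarrow> ('a \<Rightarrow> 'a) \<Rightarrow> 'a set set" where
  "map_edges B \<alpha> = edge_of \<alpha> ` B"

definition tour :: "('a \<Rightarrow> 'a) \<Rightarrow> ('a \<Rightarrow> 'a) \<Rightarrow> 'a set set \<Rightarrow> 'a \<Rightarrow> 'a" where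
  "tour \<sigma> \<alpha> F b = (if edge_of \<alpha> b \<in> F then \<sigma> (\<alpha> b) else \<sigma> b)"

definition quasi_tree :: "'a set \<Rightarrow> ('a \<Rightarrow> 'a) \<Rightarrow> ('a \<Rightarrow> 'a) \<Rightarrow> 'a set set \<Rightarrow> bool" where
  "quasi_tree B \<sigma> \<alpha> F \<longleftrightarrow> F \<subseteq> map_edges B \<alpha>
     \<and> (\<forall>b\<in>B. \<forall>c\<in>B. \<exists>n. (tour \<sigma> \<alpha> F ^^ n) b = c)"

definition cyc_dist :: "('a \<Rightarrow> 'a) \<Rightarrow> 'a \<Rightarrow> 'a \<Rightarrow> nat" where
  "cyc_dist \<tau> x y = (LEAST n. (\<tau> ^^ n) x = y)"

definition cyc_between :: "('a \<Rightarrow> 'a) \<Rightarrow> 'a \<Rightarrow> 'a \<Rightarrow> 'a \<Rightarrow> bool" where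
  "cyc_between \<tau> x y z \<longleftrightarrow> 0 < cyc_dist \<tau> x y \<and> cyc_dist \<tau> x y < cyc_dist \<tau> x z"

text \<open>Adjacency in the circle graph of the chord diagram Lambda~(M,S): two distinct edges
  are adjacent iff their chords cross, i.e. their flags alternate around the circle
  given by the tour of S.\<close>
definition lambda_adj :: "'a set \<Rightarrow> ('a \<Rightarrow> 'a) \<Rightarrow> ('a \<Rightarrow> 'a) \<Rightarrow> 'a set set \<Rightarrow> 'a set \<Rightarrow> 'a set \<Rightarrow> bool" where
  "lambda_adj B \<sigma> \<alpha> S e f \<longleftrightarrow> e \<in> map_edges B \<alpha> \<and> f \<in> map_edges B \<alpha> \<and> e \<noteq> f \<and>
     (\<exists>a\<in>B. \<exists>b\<in>B. e = edge_of \<alpha> a \<and> f = edge_of \<alpha> b \<and>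
        (cyc_between (tour \<sigma> \<alpha> S) a b (\<alpha> a) \<noteq> cyc_between (tour \<sigma> \<alpha> S) a (\<alpha> b) (\<alpha> a)))"

definition lambda_col :: "'a set set \<Rightarrow> 'a set \<Rightarrow> nat" where
  "lambda_col S x = (if x \<in> S then 1 else 2)"

definition local_comp :: "('v \<Rightarrow> 'v \<Rightarrow> bool) \<Rightarrow> 'v \<Rightarrow> ('v \<Rightarrow> 'v \<Rightarrow> bool)" where
  "local_comp G v = (\<lambda>x y. if G v x \<and> G v y \<and> x \<noteq> y then \<not> G x y else G x y)"

definition pivot :: "('v \<Rightarrow> 'v \<Rightarrow> bool) \<Rightarrow> 'v \<Rightarrow> 'v \<Rightarrow> ('v \<Rightarrow> 'v \<Rightarrow> bool)" where
  "pivot G u v = local_comp (local_comp (local_comp G u) v) u"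

end

theory Submission
  imports Defs
begin

text \<open>Number the flags 0, ..., n - 1 along the tour of S, starting at a flag a of e. An edge is
  a chord between the positions of its two flags, and two edges are adjacent in
  \<open>\<Lambda>(M, S)\<close> exactly when their chords cross. Toggling e and f changes the tour only at
  the four flags of e and f: each of them now continues where its partner flag used to. If the
  chords cross, say with positions 0 < i < j < k for the flags b, \<alpha> a, \<alpha> b, the new tour is
  again one cycle, running through the old positions in the order 0, (j, k), k, (i, j), j,
  (0, i), i, (k, n): the arcs (0, i) and (j, k) change places. Reading off crossings in this new
  numbering, e takes over the neighbours of f and vice versa, and two other chords change their
  crossing status exactly when one of them crosses e and the other f, which is the pivot. If the
  chords do not cross and b precedes \<alpha> b, the flags after b up to \<alpha> b form a set that is
  closed under the new tour and misses a, so the new tour is not a single cycle.\<close>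

lemma pivot_eq:
  assumes irrefl: "\<And>x. \<not> G x x" and sym: "\<And>x y. G x y = G y x" and "G e f" and "e \<noteq> f"
  shows "pivot G e f x y =
    (if x = y then False
     else if x = e \<and> y = f \<or> x = f \<and> y = e then True
     else if x = e then G f y else if x = f then G e y
     else if y = e then G x f else if y = f then G x e
     else G x y \<noteq> ((G e x \<and> G f y) \<noteq> (G f x \<and> G e y)))"
  using \<open>G e f\<close> \<open>e \<noteq> f\<close> irrefl[of x] irrefl[of e] irrefl[of f]
    sym[of e x] sym[of f x] sym[of e y] sym[of f y] sym[of x y] sym[of e f]
  unfolding pivot_def local_comp_def by auto

definition chords_cross :: "nat \<Rightarrow> nat \<Rightarrow> nat \<Rightarrow> nat \<Rightarrow> bool" where
  "chords_cross u v w z \<longleftrightarrow> (w \<in> {min u v<..<max u v}) \<noteq> (z \<in> {min u v<..<max u v})"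

lemma chords_cross_swap:
  "chords_cross v u w z = chords_cross u v w z"
  "chords_cross u v z w = chords_cross u v w z"
  unfolding chords_cross_def by (auto simp: min.commute max.commute)

lemma chords_cross_iff_less:
  assumes "u \<noteq> w" "u \<noteq> z" "v \<noteq> w" "v \<noteq> z"
  shows "chords_cross u v w z \<longleftrightarrow> ((u < w) \<noteq> (v < w)) \<noteq> ((u < z) \<noteq> (v < z))"
  using assms unfolding chords_cross_def by (auto simp: min_def max_def)

lemma chords_cross_commute:
  assumes "distinct [u, v, w, z]"
  shows "chords_cross u v w z = chords_cross w z u v"
proof -
  have "w < u \<longleftrightarrow> \<not> u < w" "z < u \<longleftrightarrow> \<not> u < z" "w < v \<longleftrightarrow> \<not> v < w" "z < v \<longleftrightarrow> \<not> v < z"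
    using assms by auto
  then show ?thesis
    using assms by (simp add: chords_cross_iff_less) argo
qed

lemma chords_cross_zero_iff:
  assumes "distinct [0, j, u, v]" "u < v"
  shows "chords_cross 0 j u v \<longleftrightarrow> u < j \<and> j < v"
  using assms unfolding chords_cross_def by auto

lemma mod_offset_less_iff:
  fixes n u v t :: nat
  assumes "u < n" "v < n" "t < n" "u \<noteq> v" "u \<noteq> t" "v \<noteq> t"
  shows "0 < (t + n - u) mod n \<and> (t + n - u) mod n < (v + n - u) mod n
     \<longleftrightarrow> ((u < t) \<noteq> (v < t)) \<noteq> (v < u)"
proof -
  have offset: "(s + n - u) mod n = (if u \<le> s then s - u else s + n - u)" if "s < n" for s
    using that \<open>u < n\<close> by (auto simp: le_mod_geq less_imp_diff_less)
  show ?thesis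
    unfolding offset[OF \<open>t < n\<close>] offset[OF \<open>v < n\<close>] using assms by auto
qed

lemma chords_cross_mod_offsets:
  fixes n u v w z :: nat
  assumes "u < n" "v < n" "w < n" "z < n" "distinct [u, v, w, z]"
  shows "((0 < (w + n - u) mod n \<and> (w + n - u) mod n < (v + n - u) mod n) \<noteq>
          (0 < (z + n - u) mod n \<and> (z + n - u) mod n < (v + n - u) mod n))
       = chords_cross u v w z"
proof -
  have "u \<noteq> v" "u \<noteq> w" "u \<noteq> z" "v \<noteq> w" "v \<noteq> z"
    using assms(5) by auto
  then show ?thesis
    by (simp add: mod_offset_less_iff assms(1-4) chords_cross_iff_less) blast
qed

text \<open>New position of the old position t when the circle 0, (0, i), i, (i, j), j, (j, k), k, (k, n)
  is traversed in the order 0, (j, k), k, (i, j), j, (0, i), i, (k, n).\<close>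

definition exchange_segments :: "nat \<Rightarrow> nat \<Rightarrow> nat \<Rightarrow> nat \<Rightarrow> nat" where
  "exchange_segments i j k t =
    (if t = 0 then 0 else if t < i then t + k - i else if t = i then k
     else if t < j then t + k - j - i else if t = j then k - i
     else if t < k then t - j else if t = k then k - j else t)"

context
  fixes i j k :: nat
  assumes ijk: "0 < i" "i < j" "j < k"
begin

lemma segment_cases:
  assumes "t \<notin> {0, i, j, k}"
  obtains "0 < t" "t < i" | "i < t" "t < j" | "j < t" "t < k" | "k < t"
  using assms ijk by fastforce

lemma exchange_segments_simps:
  "exchange_segments i j k 0 = 0" "exchange_segments i j k i = k"
  "exchange_segments i j k j = k - i" "exchange_segments i j k k = k - j"
  "exchange_segments i j k (Suc 0) = Suc (k - i)" "exchange_segments i j k (Suc i) = Suc (k - j)"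
  "exchange_segments i j k (Suc j) = Suc 0"
  "0 < t \<Longrightarrow> t < i \<Longrightarrow> exchange_segments i j k t = t + k - i"
  "i < t \<Longrightarrow> t < j \<Longrightarrow> exchange_segments i j k t = t + k - j - i"
  "j < t \<Longrightarrow> t < k \<Longrightarrow> exchange_segments i j k t = t - j"
  "k < t \<Longrightarrow> exchange_segments i j k t = t"
  using ijk unfolding exchange_segments_def by auto

lemma exchange_segments_less: "k < n \<Longrightarrow> t < n \<Longrightarrow> exchange_segments i j k t < n"
  using ijk unfolding exchange_segments_def by auto

lemma inj_exchange_segments: "inj (exchange_segments i j k)"
  using ijk unfolding exchange_segments_def by (intro injI) (auto split: if_splits)

lemma exchange_segments_rewire:
  assumes "k < n" "t < n"
  shows "exchange_segments i j k
      ((if t = 0 then j + 1 else if t = i then k + 1 else if t = j then 1 else if t = k then i + 1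
        else t + 1) mod n)
    = (exchange_segments i j k t + 1) mod n"
proof (cases "t \<in> {0, i, j, k}")
  case True
  then show ?thesis
    using ijk assms by (cases "k + 1 = n") (auto simp: exchange_segments_simps)
next
  case False
  then show ?thesis
    using ijk assms unfolding exchange_segments_def by (cases "t + 1 = n") auto
qed

lemma exchange_segments_less_iff:
  assumes "x \<notin> {0, i, j, k}" "y \<notin> {0, i, j, k}" "x \<noteq> y"
  shows "exchange_segments i j k x < exchange_segments i j k y \<longleftrightarrow>
    (x < y) \<noteq> ((x \<in> {0<..<j} \<and> y \<in> {i<..<k}) \<noteq> (x \<in> {i<..<k} \<and> y \<in> {0<..<j}))"
  using assms(3) ijk
  by (cases rule: segment_cases[OF assms(1)]; cases rule: segment_cases[OF assms(2)];
      simp add: exchange_segments_simps; arith)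

lemma chords_cross_exchange_segments:
  assumes "u \<notin> {0, i, j, k}" "v \<notin> {0, i, j, k}" "w \<notin> {0, i, j, k}" "z \<notin> {0, i, j, k}"
    and "distinct [u, v, w, z]"
  shows "chords_cross (exchange_segments i j k u) (exchange_segments i j k v)
      (exchange_segments i j k w) (exchange_segments i j k z) \<longleftrightarrow>
    chords_cross u v w z \<noteq>
      ((chords_cross 0 j u v \<and> chords_cross i k w z) \<noteq> (chords_cross i k u v \<and> chords_cross 0 j w z))"
proof -
  let ?P = "exchange_segments i j k"
  have "distinct (map ?P [u, v, w, z])"
    using assms(5) inj_exchange_segments by (simp add: inj_eq)
  then have cross_image: "chords_cross (?P u) (?P v) (?P w) (?P z) \<longleftrightarrow>
      ((?P u < ?P w) \<noteq> (?P v < ?P w)) \<noteq> ((?P u < ?P z) \<noteq> (?P v < ?P z))"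
    by (intro chords_cross_iff_less) auto
  have cross: "chords_cross u v w z \<longleftrightarrow> ((u < w) \<noteq> (v < w)) \<noteq> ((u < z) \<noteq> (v < z))"
    using assms(5) by (intro chords_cross_iff_less) auto
  have less: "?P x < ?P y \<longleftrightarrow>
      (x < y) \<noteq> ((x \<in> {0<..<j} \<and> y \<in> {i<..<k}) \<noteq> (x \<in> {i<..<k} \<and> y \<in> {0<..<j}))"
    if "x \<in> {u, v}" "y \<in> {w, z}" for x y
    using that assms by (intro exchange_segments_less_iff) auto
  have first: "chords_cross 0 j x y \<longleftrightarrow> (x \<in> {0<..<j}) \<noteq> (y \<in> {0<..<j})" for x y
    unfolding chords_cross_def by simp
  have second: "chords_cross i k x y \<longleftrightarrow> (x \<in> {i<..<k}) \<noteq> (y \<in> {i<..<k})" for x y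
    using ijk unfolding chords_cross_def by simp
  show ?thesis
    by (simp only: cross_image cross first second less insert_iff simp_thms)
      argo
qed

lemma exchange_segments_first_chord:
  assumes "t \<notin> {0, i, j, k}"
  shows "exchange_segments i j k t \<in> {0<..<k - i} \<longleftrightarrow> t \<in> {i<..<k}"
  using ijk by (cases rule: segment_cases[OF assms]) (simp_all add: exchange_segments_simps)

lemma exchange_segments_second_chord:
  assumes "t \<notin> {0, i, j, k}"
  shows "exchange_segments i j k t \<in> {k - j<..<k} \<longleftrightarrow> t \<in> {0<..<j}"
  using ijk by (cases rule: segment_cases[OF assms]; simp add: exchange_segments_simps; arith)

lemma chords_cross_exchange_segments_first:
  assumes "w \<notin> {0, i, j, k}" "z \<notin> {0, i, j, k}"
  shows "chords_cross (exchange_segments i j k 0) (exchange_segments i j k j)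
      (exchange_segments i j k w) (exchange_segments i j k z) \<longleftrightarrow> chords_cross i k w z"
  using ijk exchange_segments_first_chord[OF assms(1)] exchange_segments_first_chord[OF assms(2)]
  by (simp add: chords_cross_def exchange_segments_simps)

lemma chords_cross_exchange_segments_second:
  assumes "w \<notin> {0, i, j, k}" "z \<notin> {0, i, j, k}"
  shows "chords_cross (exchange_segments i j k i) (exchange_segments i j k k)
      (exchange_segments i j k w) (exchange_segments i j k z) \<longleftrightarrow> chords_cross 0 j w z"
proof -
  have "k - j < k"
    using ijk by simp
  then show ?thesis
    using exchange_segments_second_chord[OF assms(1)] exchange_segments_second_chord[OF assms(2)]
    by (simp add: chords_cross_def exchange_segments_simps min_def max_def)
qed

lemma chords_cross_exchange_segments_pair:
  "chords_cross (exchange_segments i j k 0) (exchange_segments i j k j)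
     (exchange_segments i j k i) (exchange_segments i j k k)"
proof -
  have "k - j < k - i" "k - i < k" "j < k"
    using ijk by auto
  then show ?thesis
    by (simp add: chords_cross_def exchange_segments_simps)
qed

end

definition cycle_labelling :: "'a set \<Rightarrow> ('a \<Rightarrow> 'a) \<Rightarrow> ('a \<Rightarrow> nat) \<Rightarrow> bool" where
  "cycle_labelling B f p \<longleftrightarrow>
     inj_on p B \<and> (\<forall>x\<in>B. f x \<in> B \<and> p x < card B \<and> p (f x) = (p x + 1) mod card B)"

lemma cycle_labelling_less: "cycle_labelling B f p \<Longrightarrow> x \<in> B \<Longrightarrow> p x < card B"
  unfolding cycle_labelling_def by simp

lemma cycle_labelling_step: "cycle_labelling B f p \<Longrightarrow> x \<in> B \<Longrightarrow> p (f x) = (p x + 1) mod card B"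
  unfolding cycle_labelling_def by simp

lemma cycle_labelling_distinct:
  assumes "cycle_labelling B f p" "set xs \<subseteq> B" "distinct xs"
  shows "distinct (map p xs)"
  using assms by (auto simp: cycle_labelling_def distinct_map intro: inj_on_subset)

lemma funpow_in:
  assumes "\<And>x. x \<in> B \<Longrightarrow> f x \<in> B" "x \<in> B"
  shows "(f ^^ m) x \<in> B"
  using assms by (induction m) auto

lemma cycle_labelling_funpow:
  assumes "cycle_labelling B f p" "x \<in> B"
  shows "p ((f ^^ m) x) = (p x + m) mod card B"
proof (induction m)
  case 0
  then show ?case
    using assms unfolding cycle_labelling_def by simp
next
  case (Suc m)
  have "(f ^^ m) x \<in> B"
    using assms by (intro funpow_in) (auto simp: cycle_labelling_def)
  then show ?case
    using Suc assms(1) unfolding cycle_labelling_def by (simp add: mod_simps)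
qed

lemma cycle_labelling_funpow_offset:
  assumes "cycle_labelling B f p" "x \<in> B" "y \<in> B"
  shows "(f ^^ ((p y + card B - p x) mod card B)) x = y"
proof -
  have "p x < card B" "p y < card B"
    using assms unfolding cycle_labelling_def by auto
  then have "(p x + (p y + card B - p x) mod card B) mod card B = p y"
    by (simp add: mod_add_right_eq)
  moreover have "(f ^^ ((p y + card B - p x) mod card B)) x \<in> B"
    using assms by (intro funpow_in) (auto simp: cycle_labelling_def)
  ultimately show ?thesis
    using cycle_labelling_funpow[OF assms(1,2)] assms(1,3)
    unfolding cycle_labelling_def by (metis inj_onD)
qed

lemma cycle_labelling_cyc_dist:
  assumes "cycle_labelling B f p" "x \<in> B" "y \<in> B"
  shows "cyc_dist f x y = (p y + card B - p x) mod card B"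
  unfolding cyc_dist_def
proof (rule Least_equality)
  let ?d = "(p y + card B - p x) mod card B"
  show "(f ^^ ?d) x = y"
    using assms by (rule cycle_labelling_funpow_offset)
  fix m
  assume "(f ^^ m) x = y"
  have "p x < card B"
    using assms unfolding cycle_labelling_def by simp
  have shift: "((p x + k) mod card B + (card B - p x)) mod card B = k mod card B" for k
  proof -
    have "p x + k + (card B - p x) = k + card B"
      using \<open>p x < card B\<close> by simp
    then show ?thesis
      by (metis mod_add_left_eq mod_add_self2)
  qed
  have "(p x + m) mod card B = p y"
    using cycle_labelling_funpow[OF assms(1,2), of m] \<open>(f ^^ m) x = y\<close> by simp
  then have "m mod card B = (p y + (card B - p x)) mod card B"
    using shift[of m] by simp
  also have "\<dots> = ?d"
    using shift[of ?d] cycle_labelling_funpow[OF assms(1,2), of ?d] \<open>(f ^^ ?d) x = y\<close> by simp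
  finally show "?d \<le> m"
    by (metis mod_less_eq_dividend)
qed

lemma cycle_labelling_cyc_between:
  assumes "cycle_labelling B f p" "a \<in> B" "a' \<in> B" "b \<in> B" "b' \<in> B" "distinct [a, a', b, b']"
  shows "(cyc_between f a b a' \<noteq> cyc_between f a b' a') \<longleftrightarrow> chords_cross (p a) (p a') (p b) (p b')"
proof -
  have "inj_on p B" "\<forall>x\<in>B. p x < card B"
    using assms(1) unfolding cycle_labelling_def by auto
  then have "p a < card B" "p a' < card B" "p b < card B" "p b' < card B"
    "distinct [p a, p a', p b, p b']"
    using assms(2-6) by (auto simp: inj_on_eq_iff)
  then show ?thesis
    unfolding cyc_between_def cycle_labelling_cyc_dist[OF assms(1,2,3)]
      cycle_labelling_cyc_dist[OF assms(1,2,4)] cycle_labelling_cyc_dist[OF assms(1,2,5)]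
    by (rule chords_cross_mod_offsets)
qed

lemma funpow_cyc_dist: "\<exists>m. (f ^^ m) a = x \<Longrightarrow> (f ^^ cyc_dist f a x) a = x"
  unfolding cyc_dist_def by (rule LeastI_ex)

lemma cyc_dist_le: "(f ^^ m) a = x \<Longrightarrow> cyc_dist f a x \<le> m"
  unfolding cyc_dist_def by (rule Least_le)

lemma cyc_dist_funpow:
  assumes "\<exists>m. (f ^^ m) a = x" "t \<le> cyc_dist f a x"
  shows "cyc_dist f a ((f ^^ t) a) = t"
proof (rule antisym)
  show "cyc_dist f a ((f ^^ t) a) \<le> t"
    by (rule cyc_dist_le) (rule refl)
  let ?s = "cyc_dist f a ((f ^^ t) a)"
  have "(f ^^ ?s) a = (f ^^ t) a"
    by (rule funpow_cyc_dist) blast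
  have "(f ^^ (?s + (cyc_dist f a x - t))) a = (f ^^ (cyc_dist f a x - t)) ((f ^^ ?s) a)"
    by (simp add: funpow_add add.commute)
  also have "\<dots> = (f ^^ (cyc_dist f a x - t + t)) a"
    using \<open>(f ^^ ?s) a = (f ^^ t) a\<close> by (simp add: funpow_add)
  also have "\<dots> = x"
    using funpow_cyc_dist[OF assms(1)] assms(2) by simp
  finally have "cyc_dist f a x \<le> ?s + (cyc_dist f a x - t)"
    by (rule cyc_dist_le)
  then show "t \<le> ?s"
    using assms(2) by linarith
qed

lemma cyc_dist_less_card:
  assumes "finite B" "\<And>x. x \<in> B \<Longrightarrow> f x \<in> B" "a \<in> B" "\<exists>m. (f ^^ m) a = x"
  shows "cyc_dist f a x < card B"
proof -
  let ?orbit = "(\<lambda>t. (f ^^ t) a) ` {..cyc_dist f a x}"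
  have "inj_on (\<lambda>t. (f ^^ t) a) {..cyc_dist f a x}"
    by (rule inj_on_inverseI[where g = "cyc_dist f a"]) (use cyc_dist_funpow[OF assms(4)] in auto)
  then have "card {..cyc_dist f a x} = card ?orbit"
    by (simp add: card_image)
  also have "\<dots> \<le> card B"
    using assms(1-3) by (intro card_mono) (auto intro: funpow_in)
  finally show ?thesis
    by simp
qed

lemma cyc_dist_bij_betw:
  assumes "finite B" "\<And>x. x \<in> B \<Longrightarrow> f x \<in> B" "a \<in> B" "\<And>x. x \<in> B \<Longrightarrow> \<exists>m. (f ^^ m) a = x"
  shows "bij_betw (cyc_dist f a) B {..<card B}"
proof -
  have "inj_on (cyc_dist f a) B"
    using funpow_cyc_dist[OF assms(4)] by (rule inj_on_inverseI)
  moreover have "cyc_dist f a ` B \<subseteq> {..<card B}"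
    using cyc_dist_less_card[OF assms(1-3) assms(4)] by auto
  ultimately show ?thesis
    unfolding bij_betw_def by (simp add: card_image card_subset_eq)
qed

lemma cyc_dist_step:
  assumes fin: "finite B" and maps: "\<And>x. x \<in> B \<Longrightarrow> f x \<in> B" and inj: "inj_on f B"
    and "a \<in> B" and reach: "\<And>x. x \<in> B \<Longrightarrow> \<exists>m. (f ^^ m) a = x" and x: "x \<in> B"
  shows "cyc_dist f a (f x) = (cyc_dist f a x + 1) mod card B"
proof -
  let ?p = "cyc_dist f a"
  note at = funpow_cyc_dist[OF reach]
  have bij: "bij_betw ?p B {..<card B}"
    using fin maps \<open>a \<in> B\<close> reach by (rule cyc_dist_bij_betw)
  have "(f ^^ (?p x + 1)) a = f x"
    using at[OF x] by simp
  then have "?p (f x) \<le> ?p x + 1"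
    by (rule cyc_dist_le)
  then consider "?p (f x) = ?p x + 1" | "?p (f x) = 0" | s where "?p (f x) = Suc s" "s < ?p x"
    by (cases "?p (f x)") (auto simp: le_less)
  then show ?thesis
  proof cases
    case 1
    then show ?thesis
      using bij_betw_apply[OF bij maps[OF x]] by simp
  next
    case 2
    have "?p x + 1 = card B"
    proof (rule ccontr)
      assume "?p x + 1 \<noteq> card B"
      then have "?p x + 1 \<in> ?p ` B"
        using bij_betw_apply[OF bij x] bij_betw_imp_surj_on[OF bij] by simp
      then obtain y where y: "y \<in> B" "?p y = ?p x + 1"
        by (metis imageE)
      have "y = (f ^^ (?p x + 1)) a"
        using at[OF y(1)] y(2) by simp
      also have "\<dots> = f x"
        using at[OF x] by simp
      finally show False
        using y(2) 2 by simp
    qed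
    then show ?thesis
      using 2 by simp
  next
    case 3
    then have "f ((f ^^ s) a) = f x"
      using at[OF maps[OF x]] by simp
    moreover have "(f ^^ s) a \<in> B"
      using maps \<open>a \<in> B\<close> by (rule funpow_in)
    ultimately have "(f ^^ s) a = x"
      using inj x by (simp add: inj_on_eq_iff maps)
    then have "?p x \<le> s"
      by (rule cyc_dist_le)
    then show ?thesis
      using 3 by simp
  qed
qed

lemma cyc_dist_cycle_labelling:
  assumes "finite B" "\<And>x. x \<in> B \<Longrightarrow> f x \<in> B" "inj_on f B"
    and "a \<in> B" "\<And>x. x \<in> B \<Longrightarrow> \<exists>m. (f ^^ m) a = x"
  shows "cycle_labelling B f (cyc_dist f a)"
  using bij_betw_imp_inj_on[OF cyc_dist_bij_betw[OF assms(1,2,4,5)]]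
    bij_betw_apply[OF cyc_dist_bij_betw[OF assms(1,2,4,5)]] cyc_dist_step[OF assms] assms(2)
  unfolding cycle_labelling_def by simp

locale comb_map =
  fixes B :: "'a set" and \<sigma> \<alpha> :: "'a \<Rightarrow> 'a"
  assumes is_map: "is_map B \<sigma> \<alpha>"
begin

lemma finite_flags: "finite B"
  using is_map unfolding is_map_def by simp

lemma alpha_in: "x \<in> B \<Longrightarrow> \<alpha> x \<in> B"
  using is_map unfolding is_map_def by (meson permutes_in_image)

lemma sigma_in: "x \<in> B \<Longrightarrow> \<sigma> x \<in> B"
  using is_map unfolding is_map_def by (meson permutes_in_image)

lemma alpha_alpha: "x \<in> B \<Longrightarrow> \<alpha> (\<alpha> x) = x"
  using is_map unfolding is_map_def by simp

lemma alpha_neq: "x \<in> B \<Longrightarrow> \<alpha> x \<noteq> x"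
  using is_map unfolding is_map_def by simp

lemma inj_on_sigma: "inj_on \<sigma> B"
  using is_map unfolding is_map_def by (meson permutes_inj_on)

lemma edge_of_alpha: "x \<in> B \<Longrightarrow> edge_of \<alpha> (\<alpha> x) = edge_of \<alpha> x"
  unfolding edge_of_def using alpha_alpha by auto

lemma edge_of_eq_iff: "c \<in> B \<Longrightarrow> edge_of \<alpha> x = edge_of \<alpha> c \<longleftrightarrow> x \<in> edge_of \<alpha> c"
  unfolding edge_of_def using alpha_alpha by (auto simp: doubleton_eq_iff)

lemma distinct_flags:
  assumes "c \<in> B" "d \<in> B" "edge_of \<alpha> c \<noteq> edge_of \<alpha> d"
  shows "distinct [c, \<alpha> c, d, \<alpha> d]"
proof -
  have "d \<notin> edge_of \<alpha> c" "\<alpha> d \<notin> edge_of \<alpha> c"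
    using assms edge_of_eq_iff[OF assms(1)] edge_of_alpha[OF assms(2)] by auto
  then show ?thesis
    using alpha_neq[OF assms(1)] alpha_neq[OF assms(2)] unfolding edge_of_def by auto
qed

lemma tour_in: "x \<in> B \<Longrightarrow> tour \<sigma> \<alpha> S x \<in> B"
  unfolding tour_def using alpha_in sigma_in by simp

lemma inj_on_tour: "inj_on (tour \<sigma> \<alpha> S) B"
proof -
  define g where "g x = (if edge_of \<alpha> x \<in> S then \<alpha> x else x)" for x
  have "g (g x) = x" if "x \<in> B" for x
    using that by (simp add: g_def edge_of_alpha alpha_alpha)
  then have "inj_on g B"
    by (rule inj_on_inverseI)
  moreover have "g ` B \<subseteq> B"
    by (auto simp: g_def alpha_in)
  ultimately have "inj_on (\<sigma> \<circ> g) B"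
    using inj_on_sigma by (blast intro: comp_inj_on inj_on_subset)
  moreover have "tour \<sigma> \<alpha> S = \<sigma> \<circ> g"
    by (auto simp: tour_def g_def)
  ultimately show ?thesis
    by simp
qed

lemma tour_toggle:
  assumes "x \<in> B" "a \<in> B" "b \<in> B"
  shows "tour \<sigma> \<alpha> (sym_diff S {edge_of \<alpha> a, edge_of \<alpha> b}) x =
    (if x \<in> edge_of \<alpha> a \<union> edge_of \<alpha> b then tour \<sigma> \<alpha> S (\<alpha> x) else tour \<sigma> \<alpha> S x)"
  using assms edge_of_eq_iff[OF assms(2), of x] edge_of_eq_iff[OF assms(3), of x]
  unfolding tour_def by (auto simp: edge_of_alpha alpha_alpha)

lemma quasi_tree_reach:
  "quasi_tree B \<sigma> \<alpha> S \<Longrightarrow> x \<in> B \<Longrightarrow> y \<in> B \<Longrightarrow> \<exists>n. (tour \<sigma> \<alpha> S ^^ n) x = y"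
  unfolding quasi_tree_def by blast

lemma quasi_tree_cycle_labelling:
  assumes "quasi_tree B \<sigma> \<alpha> S" "a \<in> B"
  obtains p where "cycle_labelling B (tour \<sigma> \<alpha> S) p" "p a = 0"
proof (rule that)
  show "cycle_labelling B (tour \<sigma> \<alpha> S) (cyc_dist (tour \<sigma> \<alpha> S) a)"
    using assms
    by (intro cyc_dist_cycle_labelling) (auto simp: quasi_tree_def finite_flags tour_in inj_on_tour)
  show "cyc_dist (tour \<sigma> \<alpha> S) a a = 0"
    unfolding cyc_dist_def by simp
qed

lemma quasi_tree_if_cycle_labelling:
  assumes "S \<subseteq> map_edges B \<alpha>" "cycle_labelling B (tour \<sigma> \<alpha> S) p"
  shows "quasi_tree B \<sigma> \<alpha> S"
  unfolding quasi_tree_def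
proof (intro conjI ballI)
  fix x y
  assume "x \<in> B" "y \<in> B"
  then show "\<exists>n. (tour \<sigma> \<alpha> S ^^ n) x = y"
    using cycle_labelling_funpow_offset[OF assms(2)] by blast
qed (fact assms(1))

lemma oriented_flag:
  assumes "cycle_labelling B (tour \<sigma> \<alpha> S) p" "f \<in> map_edges B \<alpha>"
  obtains b where "b \<in> B" "f = edge_of \<alpha> b" "p b < p (\<alpha> b)"
proof -
  obtain c where c: "c \<in> B" "f = edge_of \<alpha> c"
    using assms(2) unfolding map_edges_def by blast
  have "distinct (map p [c, \<alpha> c])"
    using c(1) alpha_in[OF c(1)] alpha_neq[OF c(1)] by (intro cycle_labelling_distinct[OF assms(1)]) auto
  then consider "p c < p (\<alpha> c)" | "p (\<alpha> c) < p c"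
    by fastforce
  then show ?thesis
  proof cases
    case 1
    then show ?thesis
      using that c by blast
  next
    case 2
    then show ?thesis
      using that[of "\<alpha> c"] c alpha_in alpha_alpha edge_of_alpha by simp
  qed
qed

lemma lambda_adj_edges:
  "lambda_adj B \<sigma> \<alpha> S x y \<Longrightarrow> x \<in> map_edges B \<alpha> \<and> y \<in> map_edges B \<alpha> \<and> x \<noteq> y"
  unfolding lambda_adj_def by blast

lemma lambda_adj_iff_chords_cross:
  assumes lab: "cycle_labelling B (tour \<sigma> \<alpha> S) p"
    and c: "c \<in> B" and d: "d \<in> B" and cd: "edge_of \<alpha> c \<noteq> edge_of \<alpha> d"
  shows "lambda_adj B \<sigma> \<alpha> S (edge_of \<alpha> c) (edge_of \<alpha> d) \<longleftrightarrow>
    chords_cross (p c) (p (\<alpha> c)) (p d) (p (\<alpha> d))"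
proof -
  let ?\<tau> = "tour \<sigma> \<alpha> S"
  have flags_cross:
    "(cyc_between ?\<tau> x y (\<alpha> x) \<noteq> cyc_between ?\<tau> x (\<alpha> y) (\<alpha> x)) \<longleftrightarrow>
      chords_cross (p c) (p (\<alpha> c)) (p d) (p (\<alpha> d))"
    if "x \<in> edge_of \<alpha> c" "y \<in> edge_of \<alpha> d" for x y
  proof -
    have x: "x \<in> B" "edge_of \<alpha> x = edge_of \<alpha> c" and y: "y \<in> B" "edge_of \<alpha> y = edge_of \<alpha> d"
      using that c d edge_of_eq_iff alpha_in unfolding edge_of_def by auto
    then have "distinct [x, \<alpha> x, y, \<alpha> y]"
      using cd by (metis distinct_flags)
    then have "(cyc_between ?\<tau> x y (\<alpha> x) \<noteq> cyc_between ?\<tau> x (\<alpha> y) (\<alpha> x)) \<longleftrightarrow>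
        chords_cross (p x) (p (\<alpha> x)) (p y) (p (\<alpha> y))"
      using x(1) y(1) by (intro cycle_labelling_cyc_between[OF lab]) (auto simp: alpha_in)
    also have "\<dots> \<longleftrightarrow> chords_cross (p c) (p (\<alpha> c)) (p d) (p (\<alpha> d))"
      using that c d unfolding edge_of_def by (auto simp: alpha_alpha chords_cross_swap)
    finally show ?thesis .
  qed
  have "edge_of \<alpha> c \<in> map_edges B \<alpha>" "edge_of \<alpha> d \<in> map_edges B \<alpha>"
    unfolding map_edges_def using c d by auto
  moreover have "c \<in> edge_of \<alpha> c" "d \<in> edge_of \<alpha> d"
    unfolding edge_of_def by auto
  moreover have "x \<in> edge_of \<alpha> c" "y \<in> edge_of \<alpha> d"
    if "edge_of \<alpha> c = edge_of \<alpha> x" "edge_of \<alpha> d = edge_of \<alpha> y" for x y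
    using that[symmetric] c d by (simp_all add: edge_of_eq_iff)
  ultimately show ?thesis
    unfolding lambda_adj_def using flags_cross cd c d by blast
qed

lemma lambda_adj_commute:
  assumes lab: "cycle_labelling B (tour \<sigma> \<alpha> S) p"
  shows "lambda_adj B \<sigma> \<alpha> S x y = lambda_adj B \<sigma> \<alpha> S y x"
proof (cases "x \<in> map_edges B \<alpha> \<and> y \<in> map_edges B \<alpha> \<and> x \<noteq> y")
  case True
  then obtain c d where cd: "c \<in> B" "d \<in> B" "x = edge_of \<alpha> c" "y = edge_of \<alpha> d"
    unfolding map_edges_def by auto
  have ne: "edge_of \<alpha> c \<noteq> edge_of \<alpha> d" "edge_of \<alpha> d \<noteq> edge_of \<alpha> c"
    using True cd by auto
  have "distinct [p c, p (\<alpha> c), p d, p (\<alpha> d)]"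
    using distinct_flags[OF cd(1,2) ne(1)] cycle_labelling_distinct[OF lab, of "[c, \<alpha> c, d, \<alpha> d]"] cd
    by (simp add: alpha_in)
  have "lambda_adj B \<sigma> \<alpha> S x y \<longleftrightarrow> chords_cross (p c) (p (\<alpha> c)) (p d) (p (\<alpha> d))"
    using lambda_adj_iff_chords_cross[OF lab cd(1,2) ne(1)] cd by simp
  also have "\<dots> \<longleftrightarrow> chords_cross (p d) (p (\<alpha> d)) (p c) (p (\<alpha> c))"
    by (rule chords_cross_commute) fact
  also have "\<dots> \<longleftrightarrow> lambda_adj B \<sigma> \<alpha> S y x"
    using lambda_adj_iff_chords_cross[OF lab cd(2,1) ne(2)] cd by simp
  finally show ?thesis .
next
  case False
  then show ?thesis
    using lambda_adj_edges by blast
qed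

lemma lambda_adj_iff_interleaved:
  assumes lab: "cycle_labelling B (tour \<sigma> \<alpha> S) p" and a: "a \<in> B" and b: "b \<in> B"
    and ne: "edge_of \<alpha> a \<noteq> edge_of \<alpha> b" and "p a = 0" "p b < p (\<alpha> b)"
  shows "0 < p b"
    and "lambda_adj B \<sigma> \<alpha> S (edge_of \<alpha> a) (edge_of \<alpha> b) \<longleftrightarrow> p b < p (\<alpha> a) \<and> p (\<alpha> a) < p (\<alpha> b)"
proof -
  have "distinct (map p [a, \<alpha> a, b, \<alpha> b])"
    using distinct_flags[OF a b ne] a b alpha_in by (intro cycle_labelling_distinct[OF lab]) auto
  then have "distinct [0, p (\<alpha> a), p b, p (\<alpha> b)]"
    using \<open>p a = 0\<close> by simp
  then show "0 < p b" "lambda_adj B \<sigma> \<alpha> S (edge_of \<alpha> a) (edge_of \<alpha> b) \<longleftrightarrow> p b < p (\<alpha> a) \<and> p (\<alpha> a) < p (\<alpha> b)"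
    using lambda_adj_iff_chords_cross[OF lab a b ne] chords_cross_zero_iff \<open>p a = 0\<close> \<open>p b < p (\<alpha> b)\<close>
    by auto
qed

lemma toggle_arc_closed:
  assumes lab: "cycle_labelling B (tour \<sigma> \<alpha> S) p" and a: "a \<in> B" and u: "u \<in> B"
    and ne: "edge_of \<alpha> a \<noteq> edge_of \<alpha> u" and "p a = 0" "p u < p (\<alpha> u)"
    and outside: "\<not> (p u < p (\<alpha> a) \<and> p (\<alpha> a) < p (\<alpha> u))"
    and x: "x \<in> B" "p u < p x" "p x \<le> p (\<alpha> u)"
  shows "tour \<sigma> \<alpha> (sym_diff S {edge_of \<alpha> a, edge_of \<alpha> u}) x \<in> {y \<in> B. p u < p y \<and> p y \<le> p (\<alpha> u)}"
proof -
  have step: "p (tour \<sigma> \<alpha> S y) = p y + 1" if "y \<in> B" "p y < p (\<alpha> u)" for y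
  proof -
    have "p y + 1 < card B"
      using that cycle_labelling_less[OF lab alpha_in[OF u]] by linarith
    then show ?thesis
      using cycle_labelling_step[OF lab that(1)] by simp
  qed
  show ?thesis
  proof (cases "x \<in> edge_of \<alpha> a \<union> edge_of \<alpha> u")
    case True
    have "distinct (map p [a, \<alpha> a, u, \<alpha> u])"
      using distinct_flags[OF a u ne] a u alpha_in by (intro cycle_labelling_distinct[OF lab]) auto
    then have "x \<noteq> a" "x \<noteq> u" "x \<noteq> \<alpha> a"
      using x outside \<open>p a = 0\<close> by auto
    with True have "x = \<alpha> u"
      unfolding edge_of_def by auto
    then have "tour \<sigma> \<alpha> (sym_diff S {edge_of \<alpha> a, edge_of \<alpha> u}) x = tour \<sigma> \<alpha> S u"
      using tour_toggle[OF x(1) a u] True alpha_alpha[OF u] by simp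
    then show ?thesis
      using step[OF u \<open>p u < p (\<alpha> u)\<close>] tour_in[OF u] \<open>p u < p (\<alpha> u)\<close> by simp
  next
    case False
    then have "x \<noteq> \<alpha> u"
      unfolding edge_of_def by auto
    then have "p x \<noteq> p (\<alpha> u)"
      using cycle_labelling_distinct[OF lab, of "[x, \<alpha> u]"] x(1) alpha_in[OF u] by auto
    then have "p x < p (\<alpha> u)"
      using x by simp
    then show ?thesis
      using tour_toggle[OF x(1) a u] False x step[of x] tour_in[OF x(1)] by simp
  qed
qed

lemma toggle_not_quasi_tree:
  assumes lab: "cycle_labelling B (tour \<sigma> \<alpha> S) p" and a: "a \<in> B" and u: "u \<in> B"
    and ne: "edge_of \<alpha> a \<noteq> edge_of \<alpha> u" and "p a = 0" "p u < p (\<alpha> u)"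
    and outside: "\<not> (p u < p (\<alpha> a) \<and> p (\<alpha> a) < p (\<alpha> u))"
  shows "\<not> quasi_tree B \<sigma> \<alpha> (sym_diff S {edge_of \<alpha> a, edge_of \<alpha> u})"
proof
  let ?\<tau> = "tour \<sigma> \<alpha> (sym_diff S {edge_of \<alpha> a, edge_of \<alpha> u})"
  let ?arc = "{y \<in> B. p u < p y \<and> p y \<le> p (\<alpha> u)}"
  assume "quasi_tree B \<sigma> \<alpha> (sym_diff S {edge_of \<alpha> a, edge_of \<alpha> u})"
  then obtain m where "(?\<tau> ^^ m) (\<alpha> u) = a"
    using quasi_tree_reach alpha_in[OF u] a by blast
  moreover have "(?\<tau> ^^ m) (\<alpha> u) \<in> ?arc"
  proof (induction m)
    case 0
    show ?case
      using alpha_in[OF u] \<open>p u < p (\<alpha> u)\<close> by simp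
  next
    case (Suc m)
    then show ?case
      using toggle_arc_closed[OF assms] by simp
  qed
  ultimately show False
    using \<open>p a = 0\<close> by simp
qed

end

locale crossing_edges = comb_map +
  fixes S :: "'a set set" and p :: "'a \<Rightarrow> nat" and a b :: 'a
  assumes labelling: "cycle_labelling B (tour \<sigma> \<alpha> S) p"
    and a_in: "a \<in> B" and b_in: "b \<in> B" and pos_a: "p a = 0"
    and interleaved: "0 < p b" "p b < p (\<alpha> a)" "p (\<alpha> a) < p (\<alpha> b)"
begin

abbreviation toggled :: "'a set set" where
  "toggled \<equiv> sym_diff S {edge_of \<alpha> a, edge_of \<alpha> b}"

definition relabel :: "'a \<Rightarrow> nat" where
  "relabel x = exchange_segments (p b) (p (\<alpha> a)) (p (\<alpha> b)) (p x)"

lemma flag_iff_position: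
  assumes "x \<in> B"
  shows "x \<in> edge_of \<alpha> a \<union> edge_of \<alpha> b \<longleftrightarrow> p x \<in> {0, p b, p (\<alpha> a), p (\<alpha> b)}"
proof -
  have "inj_on p B"
    using labelling unfolding cycle_labelling_def by simp
  then have eq: "p x = p y \<longleftrightarrow> x = y" if "y \<in> B" for y
    using assms that by (simp add: inj_on_eq_iff)
  show ?thesis
    using eq[OF a_in] eq[OF b_in] eq[OF alpha_in[OF a_in]] eq[OF alpha_in[OF b_in]] pos_a
    unfolding edge_of_def by auto
qed

lemma edges_distinct: "edge_of \<alpha> a \<noteq> edge_of \<alpha> b"
  using flag_iff_position[OF b_in] interleaved unfolding edge_of_def by auto

lemma position_other_edge:
  assumes "d \<in> B" "edge_of \<alpha> d \<notin> {edge_of \<alpha> a, edge_of \<alpha> b}"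
  shows "p d \<notin> {0, p b, p (\<alpha> a), p (\<alpha> b)}" "p (\<alpha> d) \<notin> {0, p b, p (\<alpha> a), p (\<alpha> b)}"
proof -
  have "d \<notin> edge_of \<alpha> a \<union> edge_of \<alpha> b" "\<alpha> d \<notin> edge_of \<alpha> a \<union> edge_of \<alpha> b"
    using assms(2) edge_of_eq_iff[OF a_in, of d] edge_of_eq_iff[OF b_in, of d]
      edge_of_eq_iff[OF a_in, of "\<alpha> d"] edge_of_eq_iff[OF b_in, of "\<alpha> d"] edge_of_alpha[OF assms(1)]
    by auto
  then show "p d \<notin> {0, p b, p (\<alpha> a), p (\<alpha> b)}" "p (\<alpha> d) \<notin> {0, p b, p (\<alpha> a), p (\<alpha> b)}"
    using flag_iff_position[OF assms(1)] flag_iff_position[OF alpha_in[OF assms(1)]] by auto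
qed

lemma position_tour_toggled:
  assumes x: "x \<in> B"
  shows "p (tour \<sigma> \<alpha> toggled x) =
    (if p x = 0 then p (\<alpha> a) + 1 else if p x = p b then p (\<alpha> b) + 1
     else if p x = p (\<alpha> a) then 1 else if p x = p (\<alpha> b) then p b + 1 else p x + 1) mod card B"
proof (cases "x \<in> edge_of \<alpha> a \<union> edge_of \<alpha> b")
  case True
  then have "p (tour \<sigma> \<alpha> toggled x) = (p (\<alpha> x) + 1) mod card B"
    using tour_toggle[OF x a_in b_in] cycle_labelling_step[OF labelling alpha_in[OF x]]
    by simp
  moreover have "x = a \<or> x = \<alpha> a \<or> x = b \<or> x = \<alpha> b"
    using True unfolding edge_of_def by auto
  ultimately show ?thesis
    using pos_a interleaved alpha_alpha[OF a_in] alpha_alpha[OF b_in] by auto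
next
  case False
  then show ?thesis
    using tour_toggle[OF x a_in b_in] cycle_labelling_step[OF labelling x] flag_iff_position[OF x]
    by simp
qed

lemma toggled_cycle_labelling: "cycle_labelling B (tour \<sigma> \<alpha> toggled) relabel"
proof -
  have k: "p (\<alpha> b) < card B"
    using cycle_labelling_less[OF labelling alpha_in[OF b_in]] .
  have "inj_on relabel B"
    using inj_exchange_segments[OF interleaved] labelling
    unfolding relabel_def cycle_labelling_def inj_on_def by (auto dest: injD)
  moreover have "relabel x < card B" if "x \<in> B" for x
    unfolding relabel_def
    using exchange_segments_less[OF interleaved k cycle_labelling_less[OF labelling that]] .
  moreover have "relabel (tour \<sigma> \<alpha> toggled x) = (relabel x + 1) mod card B" if "x \<in> B" for x
    unfolding relabel_def position_tour_toggled[OF that]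
    using exchange_segments_rewire[OF interleaved k cycle_labelling_less[OF labelling that]] .
  ultimately show ?thesis
    unfolding cycle_labelling_def using tour_in by blast
qed

lemma toggled_quasi_tree:
  assumes "S \<subseteq> map_edges B \<alpha>"
  shows "quasi_tree B \<sigma> \<alpha> toggled"
proof (rule quasi_tree_if_cycle_labelling[OF _ toggled_cycle_labelling])
  show "toggled \<subseteq> map_edges B \<alpha>"
    using assms a_in b_in unfolding map_edges_def by auto
qed

lemma lambda_adj_toggled_pair: "lambda_adj B \<sigma> \<alpha> toggled (edge_of \<alpha> a) (edge_of \<alpha> b)"
  using lambda_adj_iff_chords_cross[OF toggled_cycle_labelling a_in b_in edges_distinct]
    chords_cross_exchange_segments_pair[OF interleaved]
  unfolding relabel_def pos_a by simp

lemma lambda_adj_toggled_first: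
  assumes "y \<notin> {edge_of \<alpha> a, edge_of \<alpha> b}"
  shows "lambda_adj B \<sigma> \<alpha> toggled (edge_of \<alpha> a) y = lambda_adj B \<sigma> \<alpha> S (edge_of \<alpha> b) y"
proof (cases "y \<in> map_edges B \<alpha>")
  case True
  then obtain d where d: "d \<in> B" "y = edge_of \<alpha> d"
    unfolding map_edges_def by blast
  then have "edge_of \<alpha> a \<noteq> edge_of \<alpha> d" "edge_of \<alpha> b \<noteq> edge_of \<alpha> d"
    and d_off: "edge_of \<alpha> d \<notin> {edge_of \<alpha> a, edge_of \<alpha> b}"
    using assms by auto
  then show ?thesis
    using d lambda_adj_iff_chords_cross[OF toggled_cycle_labelling a_in d(1)]
      lambda_adj_iff_chords_cross[OF labelling b_in d(1)]
      chords_cross_exchange_segments_first[OF interleaved position_other_edge[OF d(1) d_off]] assms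
    unfolding relabel_def pos_a by simp
next
  case False
  then show ?thesis
    using lambda_adj_edges by blast
qed

lemma lambda_adj_toggled_second:
  assumes "y \<notin> {edge_of \<alpha> a, edge_of \<alpha> b}"
  shows "lambda_adj B \<sigma> \<alpha> toggled (edge_of \<alpha> b) y = lambda_adj B \<sigma> \<alpha> S (edge_of \<alpha> a) y"
proof (cases "y \<in> map_edges B \<alpha>")
  case True
  then obtain d where d: "d \<in> B" "y = edge_of \<alpha> d"
    unfolding map_edges_def by blast
  then have "edge_of \<alpha> a \<noteq> edge_of \<alpha> d" "edge_of \<alpha> b \<noteq> edge_of \<alpha> d"
    and d_off: "edge_of \<alpha> d \<notin> {edge_of \<alpha> a, edge_of \<alpha> b}"
    using assms by auto
  then show ?thesis
    using d lambda_adj_iff_chords_cross[OF toggled_cycle_labelling b_in d(1)]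
      lambda_adj_iff_chords_cross[OF labelling a_in d(1)]
      chords_cross_exchange_segments_second[OF interleaved position_other_edge[OF d(1) d_off]] assms
    unfolding relabel_def pos_a by simp
next
  case False
  then show ?thesis
    using lambda_adj_edges by blast
qed

lemma lambda_adj_toggled_other:
  assumes "x \<notin> {edge_of \<alpha> a, edge_of \<alpha> b}" "y \<notin> {edge_of \<alpha> a, edge_of \<alpha> b}" "x \<noteq> y"
  shows "lambda_adj B \<sigma> \<alpha> toggled x y \<longleftrightarrow>
    lambda_adj B \<sigma> \<alpha> S x y \<noteq>
      ((lambda_adj B \<sigma> \<alpha> S (edge_of \<alpha> a) x \<and> lambda_adj B \<sigma> \<alpha> S (edge_of \<alpha> b) y) \<noteq>
       (lambda_adj B \<sigma> \<alpha> S (edge_of \<alpha> b) x \<and> lambda_adj B \<sigma> \<alpha> S (edge_of \<alpha> a) y))"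
proof (cases "x \<in> map_edges B \<alpha> \<and> y \<in> map_edges B \<alpha>")
  case True
  then obtain c d where c: "c \<in> B" "x = edge_of \<alpha> c" and d: "d \<in> B" "y = edge_of \<alpha> d"
    unfolding map_edges_def by blast
  have ne: "edge_of \<alpha> a \<noteq> edge_of \<alpha> c" "edge_of \<alpha> b \<noteq> edge_of \<alpha> c"
    "edge_of \<alpha> a \<noteq> edge_of \<alpha> d" "edge_of \<alpha> b \<noteq> edge_of \<alpha> d" "edge_of \<alpha> c \<noteq> edge_of \<alpha> d"
    using assms c d by auto
  have "distinct (map p [c, \<alpha> c, d, \<alpha> d])"
    using distinct_flags[OF c(1) d(1) ne(5)] c d alpha_in by (intro cycle_labelling_distinct[OF labelling]) auto
  then have dist: "distinct [p c, p (\<alpha> c), p d, p (\<alpha> d)]"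
    by simp
  have "edge_of \<alpha> c \<notin> {edge_of \<alpha> a, edge_of \<alpha> b}" "edge_of \<alpha> d \<notin> {edge_of \<alpha> a, edge_of \<alpha> b}"
    using assms c d by auto
  note off = position_other_edge[OF c(1) this(1)] position_other_edge[OF d(1) this(2)]
  show ?thesis
    using c d lambda_adj_iff_chords_cross[OF toggled_cycle_labelling c(1) d(1) ne(5)]
      lambda_adj_iff_chords_cross[OF labelling c(1) d(1) ne(5)]
      lambda_adj_iff_chords_cross[OF labelling a_in c(1) ne(1)] lambda_adj_iff_chords_cross[OF labelling b_in c(1) ne(2)]
      lambda_adj_iff_chords_cross[OF labelling a_in d(1) ne(3)] lambda_adj_iff_chords_cross[OF labelling b_in d(1) ne(4)]
      chords_cross_exchange_segments[OF interleaved off dist]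
    unfolding relabel_def pos_a by simp
next
  case False
  then show ?thesis
    using lambda_adj_edges by blast
qed

lemma lambda_adj_toggled:
  "lambda_adj B \<sigma> \<alpha> toggled = pivot (lambda_adj B \<sigma> \<alpha> S) (edge_of \<alpha> a) (edge_of \<alpha> b)"
proof (intro ext)
  fix x y
  let ?G = "lambda_adj B \<sigma> \<alpha> S" and ?G' = "lambda_adj B \<sigma> \<alpha> toggled"
  let ?e = "edge_of \<alpha> a" and ?f = "edge_of \<alpha> b"
  have irrefl: "\<not> ?G z z" for z
    using lambda_adj_edges by blast
  have "?G ?e ?f"
    using lambda_adj_iff_interleaved(2)[OF labelling a_in b_in edges_distinct pos_a] interleaved by simp
  note pivot = pivot_eq[of ?G, OF irrefl lambda_adj_commute[OF labelling] this edges_distinct]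
  note commute = lambda_adj_commute[OF labelling] lambda_adj_commute[OF toggled_cycle_labelling]
  consider "x = y" | "x = ?e \<and> y = ?f \<or> x = ?f \<and> y = ?e"
    | "x = ?e" "y \<notin> {?e, ?f}" | "x = ?f" "y \<notin> {?e, ?f}"
    | "y = ?e" "x \<notin> {?e, ?f}" | "y = ?f" "x \<notin> {?e, ?f}"
    | "x \<notin> {?e, ?f}" "y \<notin> {?e, ?f}" "x \<noteq> y"
    by blast
  then show "?G' x y = pivot ?G ?e ?f x y"
  proof cases
    case 1
    then show ?thesis
      using lambda_adj_edges[of toggled x y] unfolding pivot by auto
  next
    case 2
    then show ?thesis
      using lambda_adj_toggled_pair commute(2) edges_distinct unfolding pivot by auto
  next
    case 3
    then show ?thesis
      using lambda_adj_toggled_first edges_distinct unfolding pivot by auto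
  next
    case 4
    then show ?thesis
      using lambda_adj_toggled_second edges_distinct unfolding pivot by auto
  next
    case 5
    then show ?thesis
      using lambda_adj_toggled_first[of x] commute[of x] unfolding pivot by auto
  next
    case 6
    then show ?thesis
      using lambda_adj_toggled_second[of x] commute[of x] unfolding pivot by auto
  next
    case 7
    then show ?thesis
      using lambda_adj_toggled_other unfolding pivot by auto
  qed
qed

end

lemma (in comb_map) toggle_crossing_edges:
  assumes "cycle_labelling B (tour \<sigma> \<alpha> S) p" "S \<subseteq> map_edges B \<alpha>" "a \<in> B" "b \<in> B"
    and "p a = 0" "0 < p b" "p b < p (\<alpha> a)" "p (\<alpha> a) < p (\<alpha> b)"
  shows "quasi_tree B \<sigma> \<alpha> (sym_diff S {edge_of \<alpha> a, edge_of \<alpha> b})"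
    and "lambda_adj B \<sigma> \<alpha> (sym_diff S {edge_of \<alpha> a, edge_of \<alpha> b})
      = pivot (lambda_adj B \<sigma> \<alpha> S) (edge_of \<alpha> a) (edge_of \<alpha> b)"
proof -
  interpret crossing_edges B \<sigma> \<alpha> S p a b
    using is_map assms by unfold_locales auto
  show "quasi_tree B \<sigma> \<alpha> toggled"
    using assms(2) by (rule toggled_quasi_tree)
  show "lambda_adj B \<sigma> \<alpha> toggled = pivot (lambda_adj B \<sigma> \<alpha> S) (edge_of \<alpha> a) (edge_of \<alpha> b)"
    by (rule lambda_adj_toggled)
qed

theorem lemma8:
  fixes B :: "'a set" and \<sigma> \<alpha> :: "'a \<Rightarrow> 'a" and S :: "'a set set" and e f :: "'a set"
  assumes "is_map B \<sigma> \<alpha>"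
    and "quasi_tree B \<sigma> \<alpha> S"
    and "e \<in> map_edges B \<alpha>" and "f \<in> map_edges B \<alpha>" and "e \<noteq> f"
  shows "(lambda_adj B \<sigma> \<alpha> S e f \<longrightarrow>
            quasi_tree B \<sigma> \<alpha> ((S - {e, f}) \<union> ({e, f} - S))
          \<and> lambda_adj B \<sigma> \<alpha> ((S - {e, f}) \<union> ({e, f} - S)) = pivot (lambda_adj B \<sigma> \<alpha> S) e f
          \<and> lambda_col ((S - {e, f}) \<union> ({e, f} - S))
              = (\<lambda>x. if x = e \<or> x = f then 3 - lambda_col S x else lambda_col S x))
       \<and> (quasi_tree B \<sigma> \<alpha> ((S - {e, f}) \<union> ({e, f} - S)) \<longrightarrow> lambda_adj B \<sigma> \<alpha> S e f)"
proof -
  interpret comb_map B \<sigma> \<alpha>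
    using assms(1) by unfold_locales
  obtain a where a: "a \<in> B" "e = edge_of \<alpha> a"
    using assms(3) unfolding map_edges_def by blast
  obtain p where lab: "cycle_labelling B (tour \<sigma> \<alpha> S) p" and "p a = 0"
    using quasi_tree_cycle_labelling[OF assms(2) a(1)] .
  obtain b where b: "b \<in> B" "f = edge_of \<alpha> b" "p b < p (\<alpha> b)"
    using oriented_flag[OF lab assms(4)] .
  have ne: "edge_of \<alpha> a \<noteq> edge_of \<alpha> b"
    using a b assms(5) by simp
  note positions = lambda_adj_iff_interleaved[OF lab a(1) b(1) ne \<open>p a = 0\<close> b(3)]
  have "S \<subseteq> map_edges B \<alpha>"
    using assms(2) unfolding quasi_tree_def by simp
  note crossing = toggle_crossing_edges[OF lab this a(1) b(1) \<open>p a = 0\<close> positions(1)]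
  show ?thesis
  proof (intro conjI impI)
    assume "lambda_adj B \<sigma> \<alpha> S e f"
    then show "quasi_tree B \<sigma> \<alpha> (sym_diff S {e, f})"
      and "lambda_adj B \<sigma> \<alpha> (sym_diff S {e, f}) = pivot (lambda_adj B \<sigma> \<alpha> S) e f"
      using crossing positions(2) a b by auto
  next
    show "lambda_col (sym_diff S {e, f}) = (\<lambda>x. if x = e \<or> x = f then 3 - lambda_col S x else lambda_col S x)"
      unfolding lambda_col_def by auto
  next
    assume "quasi_tree B \<sigma> \<alpha> (sym_diff S {e, f})"
    then show "lambda_adj B \<sigma> \<alpha> S e f"
      using toggle_not_quasi_tree[OF lab a(1) b(1) ne \<open>p a = 0\<close> b(3)] positions(2) a b by auto
  qed
qed

end
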